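(* Let $n \ge 3$, let $m \ge 1$ be odd, and let $a,b \in \mathbb{Z}/m$ with $a^2\equiv b^2\equiv 1\bmod m$. Then $Q_{2^n m}\cong C_m\rtimes_{(a,b)} Q_{2^n}$ if and only if $(a,b)\equiv(1,-1)$, $(-1,1)$ or $(-1,-1) \bmod m$ in the case $n=3$, and $(a,b) \equiv (1,-1) \bmod m$ in the case $n\ge 4$.
   Context: $Q_{4k}=\langle x,y\mid x^k=y^2, yxy^{-1}=x^{-1}\rangle$. $C_m\rtimes_{(a,b)}Q_{2^n}$ is the semidirect product in which the generators $x,y$ of $Q_{2^n} = \langle x,y\mid x^{2^{n-2}}=y^2, yxy^{-1}=x^{-1}\rangle$ act on a generator $u$ of $C_m$ by $u\mapsto u^a$ and $u\mapsto u^b$ respectively. *)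

theory Defs
  imports "HOL-Algebra.Group" "HOL-Number_Theory.Cong"
begin

text \<open>Concrete model of the dicyclic / generalized quaternion group
  Q_{4k} = < x, y | x^k = y^2, y x y^-1 = x^-1 > (k >= 1), of order 4k.
  The element (i, j) with 0 <= i < 2k, 0 <= j < 2 stands for x^i y^j.
  Multiplication: x^i1 y^j1 x^i2 y^j2 = x^(i1 + (-1)^j1 i2 + [j1=j2=1] k) y^(j1+j2 mod 2).\<close>

definition Qmult :: "int \<Rightarrow> int \<times> int \<Rightarrow> int \<times> int \<Rightarrow> int \<times> int" where
  "Qmult k p q =
     ((fst p + (if snd p = 0 then fst q else - fst q)
        + (if snd p = 1 \<and> snd q = 1 then k else 0)) mod (2*k),
      (snd p + snd q) mod 2)"

definition Qgrp :: "int \<Rightarrow> (int \<times> int) monoid" where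
  "Qgrp k = \<lparr> carrier = {0..<2*k} \<times> {0..<2}, monoid.mult = Qmult k, monoid.one = (0, 0) \<rparr>"

text \<open>Q_{2^n} is Qgrp (2^(n-2)) and Q_{2^n m} is Qgrp (2^(n-2) m).\<close>

text \<open>Image of x^i y^j under the action on C_m = Z/m given by x |-> (u |-> u^a),
  y |-> (u |-> u^b): multiplication by a^i b^j on exponents of u.\<close>

definition qact :: "int \<Rightarrow> int \<Rightarrow> int \<times> int \<Rightarrow> int" where
  "qact a b q = a ^ nat (fst q) * b ^ nat (snd q)"

text \<open>The semidirect product C_m \<rtimes>_(a,b) Q_{2^n}: elements (e, q) stand for u^e q,
  with (u^e1, q1)(u^e2, q2) = (u^e1 * q1(u^e2), q1 q2).\<close>

definition SDmult :: "int \<Rightarrow> nat \<Rightarrow> int \<Rightarrow> int \<Rightarrow>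
    int \<times> (int \<times> int) \<Rightarrow> int \<times> (int \<times> int) \<Rightarrow> int \<times> (int \<times> int)" where
  "SDmult m n a b s t =
     ((fst s + qact a b (snd s) * fst t) mod m, Qmult (2 ^ (n - 2)) (snd s) (snd t))"

definition SDgrp :: "int \<Rightarrow> nat \<Rightarrow> int \<Rightarrow> int \<Rightarrow> (int \<times> (int \<times> int)) monoid" where
  "SDgrp m n a b = \<lparr> carrier = {0..<m} \<times> carrier (Qgrp (2 ^ (n - 2))),
     monoid.mult = SDmult m n a b, monoid.one = (0, (0, 0)) \<rparr>"

end

theory Submission
  imports Defs
begin

text \<open>Let u generate C_m with m > 1. Since u has odd order, u^5 \<noteq> u, whereas every element
  x^i y of the dicyclic group has order 4; so an isomorphism sends a rotation x^s to u. Every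
  element of the dicyclic group commutes with x^s or is inverted by it, and applying this to the
  images of x and y forces a, b \<equiv> \<plusminus>1. If a \<equiv> b \<equiv> 1 then u is central, so x^s commutes
  with y, i.e. x^(2s) = 1, contradicting u^2 \<noteq> 1. If n \<ge> 4 and a \<equiv> -1, the preimage of x
  is inverted by x^s: a rotation would again give x^(2s) = 1, and an element x^i y has order 4
  while x has order 2^(n-1) \<ge> 8.

  Conversely x \<mapsto> u x, y \<mapsto> y is an isomorphism Q_(2^n m) \<rightarrow> C_m \<rtimes>_(1,-1) Q_(2^n) by the
  Chinese remainder theorem, and for n = 3 automorphisms of Q_8 carry the action (1,-1) to
  (-1,1) and (-1,-1).\<close>

lemma carrier_Qgrp: "carrier (Qgrp K) = {0..<2*K} \<times> {0..<2}"
  by (simp add: Qgrp_def)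

lemma pair_in_carrier_Qgrp:
  "(i, j) \<in> carrier (Qgrp K) \<longleftrightarrow> 0 \<le> i \<and> i < 2*K \<and> 0 \<le> j \<and> j < 2"
  by (simp add: carrier_Qgrp)

lemma Qmult_closed: "K > 0 \<Longrightarrow> Qmult K p q \<in> carrier (Qgrp K)"
  by (simp add: Qmult_def carrier_Qgrp)

lemma Qgrp_elem_cases:
  assumes "h \<in> carrier (Qgrp K)"
  obtains (rotation) i where "h = (i,0)" "0 \<le> i" "i < 2*K"
    | (reflection) i where "h = (i,1)" "0 \<le> i" "i < 2*K"
proof -
  obtain i j where "h = (i,j)" "0 \<le> i" "i < 2*K" "0 \<le> j" "j < 2"
    using assms by (cases h) (auto simp: carrier_Qgrp)
  moreover have "j = 0 \<or> j = 1" using calculation by arith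
  ultimately show ?thesis using that by blast
qed

lemma Qmult_reflection_pow5:
  assumes "K > 0" "0 \<le> i" "i < 2*K"
  shows "Qmult K (Qmult K (Qmult K (Qmult K (i,1) (i,1)) (i,1)) (i,1)) (i,1) = (i,1)"
proof -
  have sq: "Qmult K (i,1) (i,1) = (K,0)" using assms by (simp add: Qmult_def)
  have "((K + i) mod (2*K) - i + K) mod (2*K) = (K + i - i + K) mod (2*K)"
    by (metis mod_add_left_eq mod_diff_left_eq)
  then have "Qmult K (Qmult K (K,0) (i,1)) (i,1) = (0,0)"
    by (simp add: Qmult_def)
  then show ?thesis using assms by (simp add: sq Qmult_def)
qed

lemma Qmult_rotation_commutes_or_inverts:
  assumes "0 \<le> s" "h \<in> carrier (Qgrp K)"
  shows "Qmult K h (s,0) = Qmult K (s,0) h \<or> Qmult K (Qmult K (s,0) h) (s,0) = h"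
proof -
  have conj: "((s + i) mod (2*K) - s) mod (2*K) = (s + i - s) mod (2*K)" for i
    by (simp add: mod_simps)
  from assms(2) show ?thesis
    by (cases rule: Qgrp_elem_cases)
      (use assms(1) conj in \<open>auto simp: Qmult_def add.commute\<close>)
qed

lemma Qmult_rotation_cube:
  assumes "0 \<le> s" "s < 2*K" "2*K dvd 2*s"
  shows "Qmult K (Qmult K (s,0) (s,0)) (s,0) = (s,0)"
proof -
  have "((s + s) mod (2*K) + s) mod (2*K) = s mod (2*K)"
    using assms(3) by (simp add: mod_simps mult_2 [symmetric] dvd_eq_mod_eq_0)
  then show ?thesis using assms by (simp add: Qmult_def)
qed

lemma Qmult_rotation_commutes_y_dvd:
  assumes "0 \<le> s" "s < 2*K" "Qmult K (0,1) (s,0) = Qmult K (s,0) (0,1)"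
  shows "2*K dvd 2*s"
proof -
  have "(- s) mod (2*K) = s mod (2*K)" using assms by (simp add: Qmult_def)
  then have "2*K dvd - s - s" by (simp only: mod_eq_dvd_iff)
  then show ?thesis by (simp add: dvd_minus_iff flip: mult_2 minus_add_distrib)
qed

lemma Qmult_rotation_inverts_rotation_dvd:
  assumes "0 \<le> s" "s < 2*K" "0 \<le> i" "i < 2*K"
    "Qmult K (Qmult K (s,0) (i,0)) (s,0) = (i,0)"
  shows "2*K dvd 2*s"
proof -
  have "(s + i + s) mod (2*K) = i mod (2*K)" using assms by (simp add: Qmult_def mod_simps)
  then show ?thesis by (simp add: mod_eq_dvd_iff)
qed

lemma carrier_SDgrp: "carrier (SDgrp m n a b) = {0..<m} \<times> carrier (Qgrp (2^(n-2)))"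
  by (simp add: SDgrp_def)

lemma SDgrp_cong:
  assumes "[a = a'] (mod m)" "[b = b'] (mod m)"
  shows "SDgrp m n a b = SDgrp m n a' b'"
proof -
  have "SDmult m n a b = SDmult m n a' b'"
  proof (intro ext)
    fix s t :: "int \<times> int \<times> int"
    have "[fst s + qact a b (snd s) * fst t = fst s + qact a' b' (snd s) * fst t] (mod m)"
      unfolding qact_def using assms by (intro cong_add cong_mult cong_pow cong_refl)
    then show "SDmult m n a b s t = SDmult m n a' b' s t" by (simp add: SDmult_def cong_def)
  qed
  then show ?thesis by (simp add: SDgrp_def)
qed

lemma SDgrp_iso_by_Qgrp_aut:
  assumes \<tau>: "\<tau> \<in> iso (Qgrp (2^(n-2))) (Qgrp (2^(n-2)))"
    and act: "\<And>q. q \<in> carrier (Qgrp (2^(n-2))) \<Longrightarrow> qact a' b' (\<tau> q) = qact a b q"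
  shows "SDgrp m n a b \<cong> SDgrp m n a' b'"
proof -
  let ?C = "carrier (Qgrp (2^(n-2)))"
  have \<tau>_bij: "bij_betw \<tau> ?C ?C" and \<tau>_mult: "\<And>p q. p \<in> ?C \<Longrightarrow> q \<in> ?C \<Longrightarrow>
      \<tau> (Qmult (2^(n-2)) p q) = Qmult (2^(n-2)) (\<tau> p) (\<tau> q)"
    using \<tau> by (auto simp: iso_def hom_def Qgrp_def)
  have "map_prod id \<tau> \<in> hom (SDgrp m n a b) (SDgrp m n a' b')"
    using \<tau>_bij \<tau>_mult act
    by (intro homI) (auto simp: carrier_SDgrp bij_betw_apply SDgrp_def SDmult_def)
  moreover have "bij_betw (map_prod id \<tau>) ({0..<m} \<times> ?C) ({0..<m} \<times> ?C)"
    using \<tau>_bij by (intro bij_betw_map_prod bij_betw_id)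
  ultimately show ?thesis
    by (auto simp: is_iso_def iso_def carrier_SDgrp)
qed

lemma carrier_Q8: "carrier (Qgrp 2) = {(0,0),(0,1),(1,0),(1,1),(2,0),(2,1),(3,0),(3,1)}"
proof -
  have "{0..<2*2::int} = {0,1,2,3}" "{0..<2::int} = {0,1}" by auto
  then show ?thesis by (auto simp: carrier_Qgrp)
qed

text \<open>The automorphisms x \<leftrightarrow> y and x \<mapsto> x y, y \<mapsto> y of Q_8.\<close>

definition Q8_swap :: "int \<times> int \<Rightarrow> int \<times> int" where
  "Q8_swap p = (if p = (0,1) then (1,0) else if p = (1,0) then (0,1) else if p = (1,1) then (3,1)
     else if p = (2,1) then (3,0) else if p = (3,0) then (2,1) else if p = (3,1) then (1,1) else p)"

definition Q8_shear :: "int \<times> int \<Rightarrow> int \<times> int" where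
  "Q8_shear p = (if p = (1,0) then (1,1) else if p = (1,1) then (3,0)
     else if p = (3,0) then (3,1) else if p = (3,1) then (1,0) else p)"

lemma Q8_swap_iso: "Q8_swap \<in> iso (Qgrp 2) (Qgrp 2)"
proof -
  have "Q8_swap \<in> hom (Qgrp 2) (Qgrp 2)"
  proof (rule homI)
    fix p q assume "p \<in> carrier (Qgrp 2)" "q \<in> carrier (Qgrp 2)"
    then show "Q8_swap (p \<otimes>\<^bsub>Qgrp 2\<^esub> q) = Q8_swap p \<otimes>\<^bsub>Qgrp 2\<^esub> Q8_swap q"
      unfolding carrier_Q8 by (elim insertE emptyE; simp add: Q8_swap_def Qgrp_def Qmult_def)
  qed (auto simp: carrier_Q8 Q8_swap_def)
  moreover have "bij_betw Q8_swap (carrier (Qgrp 2)) (carrier (Qgrp 2))"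
    by (auto simp: carrier_Q8 bij_betw_def inj_on_def Q8_swap_def)
  ultimately show ?thesis by (simp add: iso_def)
qed

lemma Q8_shear_iso: "Q8_shear \<in> iso (Qgrp 2) (Qgrp 2)"
proof -
  have "Q8_shear \<in> hom (Qgrp 2) (Qgrp 2)"
  proof (rule homI)
    fix p q assume "p \<in> carrier (Qgrp 2)" "q \<in> carrier (Qgrp 2)"
    then show "Q8_shear (p \<otimes>\<^bsub>Qgrp 2\<^esub> q) = Q8_shear p \<otimes>\<^bsub>Qgrp 2\<^esub> Q8_shear q"
      unfolding carrier_Q8 by (elim insertE emptyE; simp add: Q8_shear_def Qgrp_def Qmult_def)
  qed (auto simp: carrier_Q8 Q8_shear_def)
  moreover have "bij_betw Q8_shear (carrier (Qgrp 2)) (carrier (Qgrp 2))"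
    by (auto simp: carrier_Q8 bij_betw_def inj_on_def Q8_shear_def)
  ultimately show ?thesis by (simp add: iso_def)
qed

lemma SDgrp_Q8_iso_minus_one_one: "SDgrp m 3 1 (-1) \<cong> SDgrp m 3 (-1) 1"
  by (rule SDgrp_iso_by_Qgrp_aut[where \<tau> = Q8_swap])
    (auto simp: Q8_swap_iso carrier_Q8 Q8_swap_def qact_def)

lemma SDgrp_Q8_iso_minus_one_minus_one: "SDgrp m 3 1 (-1) \<cong> SDgrp m 3 (-1) (-1)"
  by (rule SDgrp_iso_by_Qgrp_aut[where \<tau> = Q8_shear])
    (auto simp: Q8_shear_iso carrier_Q8 Q8_shear_def qact_def)

text \<open>x^i y^j \<mapsto> u^i x^i y^j, i.e. x \<mapsto> u x and y \<mapsto> y.\<close>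

definition Q_to_SD :: "int \<Rightarrow> int \<Rightarrow> int \<times> int \<Rightarrow> int \<times> (int \<times> int)" where
  "Q_to_SD m k p = (fst p mod m, (fst p mod (2*k), snd p))"

lemma Q_to_SD_mult:
  fixes m :: int and n :: nat
  defines "k \<equiv> 2^(n-2)"
  assumes "odd m" "p \<in> carrier (Qgrp (k*m))" "q \<in> carrier (Qgrp (k*m))"
  shows "Q_to_SD m k (Qmult (k*m) p q) = SDmult m n 1 (-1) (Q_to_SD m k p) (Q_to_SD m k q)"
proof -
  obtain t where "m = 2*t + 1" using \<open>odd m\<close> by (rule oddE)
  then have "x + k*m = (x + k) + t*(2*k)" for x
    by (simp add: algebra_simps)
  then have shift: "(x + k*m) mod (2*k) = (x + k) mod (2*k)" for x
    by (metis mod_mult_self1)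
  have reduce: "(x mod (2*(k*m))) mod m = x mod m"
      "(x mod (2*(k*m))) mod (2*k) = x mod (2*k)" for x
    by (simp_all add: mod_mod_cancel)
  have diff: "(x mod (2*k) - y mod (2*k) + k) mod (2*k) = (x - y + k) mod (2*k)" for x y
    by (metis mod_add_left_eq mod_diff_eq)
  from assms(3) show ?thesis
  proof (cases rule: Qgrp_elem_cases)
    case p: rotation
    from assms(4) show ?thesis
      by (cases rule: Qgrp_elem_cases)
        (simp_all add: p Q_to_SD_def Qmult_def SDmult_def qact_def reduce shift diff mod_simps
          flip: k_def)
  next
    case p: reflection
    from assms(4) show ?thesis
      by (cases rule: Qgrp_elem_cases)
        (simp_all add: p Q_to_SD_def Qmult_def SDmult_def qact_def reduce shift diff mod_simps
          flip: k_def)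
  qed
qed

lemma inj_on_Q_to_SD:
  assumes "coprime m (2*k)"
  shows "inj_on (Q_to_SD m k) (carrier (Qgrp (k*m)))"
proof (rule inj_onI)
  fix p q assume p: "p \<in> carrier (Qgrp (k*m))" and q: "q \<in> carrier (Qgrp (k*m))"
    and eq: "Q_to_SD m k p = Q_to_SD m k q"
  then have "[fst p = fst q] (mod m)" "[fst p = fst q] (mod 2*k)" "snd p = snd q"
    by (auto simp: Q_to_SD_def cong_def)
  then have "[fst p = fst q] (mod m * (2*k))"
    using assms coprime_cong_mult by blast
  then have "fst p = fst q"
    using p q by (intro cong_less_imp_eq_int) (auto simp: carrier_Qgrp algebra_simps)
  then show "p = q" using \<open>snd p = snd q\<close> by (simp add: prod_eq_iff)
qed

lemma Q_to_SD_image: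
  assumes "coprime m (2*k)" "m > 0" "k > 0"
  shows "Q_to_SD m k ` carrier (Qgrp (k*m)) = {0..<m} \<times> carrier (Qgrp k)"
proof (rule card_subset_eq)
  show "Q_to_SD m k ` carrier (Qgrp (k*m)) \<subseteq> {0..<m} \<times> carrier (Qgrp k)"
    using assms by (auto simp: Q_to_SD_def carrier_Qgrp)
  have "nat (2*(k*m)) = nat m * nat (2*k)"
    using assms by (simp add: nat_mult_distrib [symmetric] algebra_simps)
  then show "card (Q_to_SD m k ` carrier (Qgrp (k*m))) = card ({0..<m} \<times> carrier (Qgrp k))"
    using card_image[OF inj_on_Q_to_SD[OF assms(1)]]
    by (simp add: carrier_Qgrp card_cartesian_product)
qed (simp add: carrier_Qgrp)

lemma Qgrp_iso_SDgrp_standard: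
  assumes "odd m" "m > 0"
  shows "Qgrp (2^(n-2) * m) \<cong> SDgrp m n 1 (-1)"
proof -
  let ?k = "(2::int)^(n-2)"
  have coprime: "coprime m (2*?k)"
    using \<open>odd m\<close> by (simp flip: power_Suc)
  have "Q_to_SD m ?k \<in> hom (Qgrp (?k*m)) (SDgrp m n 1 (-1))"
    using Q_to_SD_image[OF coprime \<open>m > 0\<close>] Q_to_SD_mult[OF \<open>odd m\<close>]
    by (intro homI) (auto simp: carrier_SDgrp SDgrp_def Qgrp_def)
  moreover have "bij_betw (Q_to_SD m ?k) (carrier (Qgrp (?k*m))) (carrier (SDgrp m n 1 (-1)))"
    using inj_on_Q_to_SD[OF coprime] Q_to_SD_image[OF coprime \<open>m > 0\<close>]
    by (simp add: bij_betw_def carrier_SDgrp)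
  ultimately show ?thesis by (auto simp: is_iso_def iso_def)
qed

locale Qgrp_SDgrp_iso =
  fixes n :: nat and m a b :: int and \<phi> :: "int \<times> int \<Rightarrow> int \<times> int \<times> int"
  assumes n_ge_3: "n \<ge> 3" and m_gt_1: "m > 1" and odd_m: "odd m"
    and iso: "\<phi> \<in> iso (Qgrp (2^(n-2) * m)) (SDgrp m n a b)"
begin

abbreviation "k \<equiv> (2::int)^(n-2)"
abbreviation "K \<equiv> k * m"
abbreviation qmul (infixl "\<cdot>" 70) where "p \<cdot> q \<equiv> Qmult K p q"
abbreviation sdmul (infixl "\<star>" 70) where "g \<star> h \<equiv> SDmult m n a b g h"

lemma k_ge_2: "k \<ge> 2"
  using power_increasing[of 1 "n-2" "2::int"] n_ge_3 by simp

lemma K_pos: "K > 0"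
  using k_ge_2 m_gt_1 by simp

lemma \<phi>_mult:
  "p \<in> carrier (Qgrp K) \<Longrightarrow> q \<in> carrier (Qgrp K) \<Longrightarrow> \<phi> (p \<cdot> q) = \<phi> p \<star> \<phi> q"
  using hom_mult[of \<phi> "Qgrp K" "SDgrp m n a b" p q] iso
  by (simp add: iso_def Qgrp_def SDgrp_def)

lemma \<phi>_eq_iff:
  "p \<in> carrier (Qgrp K) \<Longrightarrow> q \<in> carrier (Qgrp K) \<Longrightarrow> \<phi> p = \<phi> q \<longleftrightarrow> p = q"
  using iso by (auto simp: iso_def bij_betw_def dest: inj_onD)

lemma \<phi>_preimage:
  assumes "g \<in> carrier (SDgrp m n a b)"
  obtains p where "p \<in> carrier (Qgrp K)" "\<phi> p = g"
proof -
  have "g \<in> \<phi> ` carrier (Qgrp K)"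
    using iso assms by (simp add: iso_def bij_betw_def)
  then show ?thesis using that by blast
qed

lemmas qmul_closed = Qmult_closed[OF K_pos]

lemma \<phi>_closed: "p \<in> carrier (Qgrp K) \<Longrightarrow> \<phi> p \<in> carrier (SDgrp m n a b)"
  using iso by (auto simp: iso_def hom_def)

abbreviation "u \<equiv> (1::int, 0::int, 0::int)"
abbreviation "x \<equiv> (0::int, 1::int, 0::int)"
abbreviation "y \<equiv> (0::int, 0::int, 1::int)"

lemma generators_in_carrier:
  "u \<in> carrier (SDgrp m n a b)" "x \<in> carrier (SDgrp m n a b)" "y \<in> carrier (SDgrp m n a b)"
  using m_gt_1 k_ge_2 by (simp_all add: carrier_SDgrp carrier_Qgrp)

lemma sdmul_simps:
  "(e, (i, 0)) \<star> (e', (i', j')) = ((e + a ^ nat i * e') mod m, Qmult k (i, 0) (i', j'))"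
  "(e, (i, 1)) \<star> (e', (i', j')) = ((e + a ^ nat i * b * e') mod m, Qmult k (i, 1) (i', j'))"
  by (simp_all add: SDmult_def qact_def)

lemma cong_minus_one_iff: "[c = -1] (mod m) \<longleftrightarrow> (c + 1) mod m = 0"
  by (simp add: cong_iff_dvd_diff dvd_eq_mod_eq_0)

lemma one_mod_m: "1 mod m = 1"
  using m_gt_1 by simp

lemma m_not_dvd_2_4: "\<not> m dvd 2" "\<not> m dvd 4"
proof -
  have "m = 3" if "m dvd 4" using zdvd_imp_le[OF that] m_gt_1 odd_m by presburger
  then show "\<not> m dvd 4" by auto
  then show "\<not> m dvd 2" by (meson dvd_trans even_numeral dvd_refl)
qed

lemma u_cube_ne: "u \<star> u \<star> u \<noteq> u"
proof -
  have "(3::int) mod m \<noteq> 1 mod m"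
    using m_not_dvd_2_4 by (simp only: mod_eq_dvd_iff) simp
  then show ?thesis using k_ge_2 by (simp add: sdmul_simps Qmult_def mod_simps one_mod_m)
qed

lemma u_pow5_ne: "u \<star> u \<star> u \<star> u \<star> u \<noteq> u"
proof -
  have "(5::int) mod m \<noteq> 1 mod m"
    using m_not_dvd_2_4 by (simp only: mod_eq_dvd_iff) simp
  then show ?thesis using k_ge_2 by (simp add: sdmul_simps Qmult_def mod_simps one_mod_m)
qed

lemma x_pow5_ne:
  assumes "n \<ge> 4"
  shows "x \<star> x \<star> x \<star> x \<star> x \<noteq> x"
proof -
  have "k \<ge> 4"
    using power_increasing[of 2 "n-2" "2::int"] assms by simp
  then show ?thesis by (simp add: sdmul_simps Qmult_def)
qed

lemma x_commutes_u_iff: "x \<star> u = u \<star> x \<longleftrightarrow> [a = 1] (mod m)"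
  using k_ge_2 by (simp add: sdmul_simps Qmult_def cong_def one_mod_m)

lemma u_inverts_x_iff: "u \<star> x \<star> u = x \<longleftrightarrow> [a = -1] (mod m)"
  using k_ge_2
  by (simp add: sdmul_simps Qmult_def cong_minus_one_iff one_mod_m mod_simps add.commute)

lemma y_commutes_u_iff: "y \<star> u = u \<star> y \<longleftrightarrow> [b = 1] (mod m)"
  using k_ge_2 by (simp add: sdmul_simps Qmult_def cong_def one_mod_m)

lemma u_inverts_y_iff: "u \<star> y \<star> u = y \<longleftrightarrow> [b = -1] (mod m)"
  using k_ge_2
  by (simp add: sdmul_simps Qmult_def cong_minus_one_iff one_mod_m mod_simps add.commute)

lemma u_central:
  assumes "[a = 1] (mod m)" "[b = 1] (mod m)" "g \<in> carrier (SDgrp m n a b)"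
  shows "g \<star> u = u \<star> g"
proof -
  obtain e i j where g: "g = (e, (i, j))" "0 \<le> e" "e < m" "(i, j) \<in> carrier (Qgrp k)"
    using assms(3) by (auto simp: carrier_SDgrp)
  have "[a ^ nat i * b ^ nat j = 1 ^ nat i * 1 ^ nat j] (mod m)"
    using assms(1,2) by (intro cong_mult cong_pow)
  then have "(e + a ^ nat i * b ^ nat j) mod m = (e + 1) mod m"
    unfolding cong_def by (metis mod_add_right_eq power_one mult_1)
  then show ?thesis
    using g by (auto simp: SDmult_def qact_def Qmult_def carrier_Qgrp add.commute)
qed

lemma u_preimage_rotation:
  obtains s where "0 \<le> s" "s < 2*K" "\<phi> (s, 0) = u"
proof -
  obtain p where p: "p \<in> carrier (Qgrp K)" "\<phi> p = u"
    using \<phi>_preimage generators_in_carrier(1) .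
  from p(1) show ?thesis
  proof (cases rule: Qgrp_elem_cases)
    case (rotation s)
    then show ?thesis using that p by blast
  next
    case (reflection i)
    then have "\<phi> (p \<cdot> p \<cdot> p \<cdot> p \<cdot> p) = \<phi> p"
      using Qmult_reflection_pow5 K_pos by simp
    then have "u \<star> u \<star> u \<star> u \<star> u = u"
      using p by (simp add: \<phi>_mult qmul_closed)
    with u_pow5_ne show ?thesis by contradiction
  qed
qed

lemma u_preimage_not_involution:
  assumes s: "0 \<le> s" "s < 2*K" "\<phi> (s, 0) = u"
  shows "\<not> 2*K dvd 2*s"
proof
  assume "2*K dvd 2*s"
  then have "\<phi> ((s, 0) \<cdot> (s, 0) \<cdot> (s, 0)) = \<phi> (s, 0)"
    using Qmult_rotation_cube s(1,2) by simp
  then have "u \<star> u \<star> u = u"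
    using s by (simp add: \<phi>_mult qmul_closed pair_in_carrier_Qgrp)
  with u_cube_ne show False by contradiction
qed

lemma commutes_or_inverts_u:
  assumes "g \<in> carrier (SDgrp m n a b)"
  shows "g \<star> u = u \<star> g \<or> u \<star> g \<star> u = g"
proof -
  obtain s where s: "0 \<le> s" "s < 2*K" "\<phi> (s, 0) = u"
    by (rule u_preimage_rotation)
  obtain h where h: "h \<in> carrier (Qgrp K)" "\<phi> h = g"
    using \<phi>_preimage[OF assms] .
  have "h \<cdot> (s, 0) = (s, 0) \<cdot> h \<or> (s, 0) \<cdot> h \<cdot> (s, 0) = h"
    using Qmult_rotation_commutes_or_inverts[OF s(1) h(1)] .
  then have "\<phi> (h \<cdot> (s, 0)) = \<phi> ((s, 0) \<cdot> h) \<or> \<phi> ((s, 0) \<cdot> h \<cdot> (s, 0)) = \<phi> h"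
    by auto
  then show ?thesis
    using s h by (simp add: \<phi>_mult qmul_closed pair_in_carrier_Qgrp)
qed

lemma a_cong_plus_minus_one: "[a = 1] (mod m) \<or> [a = -1] (mod m)"
  using commutes_or_inverts_u[OF generators_in_carrier(2)] x_commutes_u_iff u_inverts_x_iff
  by blast

lemma b_cong_plus_minus_one: "[b = 1] (mod m) \<or> [b = -1] (mod m)"
  using commutes_or_inverts_u[OF generators_in_carrier(3)] y_commutes_u_iff u_inverts_y_iff
  by blast

lemma action_nontrivial: "\<not> ([a = 1] (mod m) \<and> [b = 1] (mod m))"
proof
  assume ab: "[a = 1] (mod m) \<and> [b = 1] (mod m)"
  obtain s where s: "0 \<le> s" "s < 2*K" "\<phi> (s, 0) = u"
    by (rule u_preimage_rotation)
  have y_in: "(0, 1) \<in> carrier (Qgrp K)" and s_in: "(s, 0) \<in> carrier (Qgrp K)"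
    using K_pos s by (simp_all add: carrier_Qgrp)
  have "\<phi> ((0, 1) \<cdot> (s, 0)) = \<phi> ((s, 0) \<cdot> (0, 1))"
    using u_central[OF _ _ \<phi>_closed[OF y_in]] ab s(3) by (simp add: \<phi>_mult y_in s_in)
  then have "(0, 1) \<cdot> (s, 0) = (s, 0) \<cdot> (0, 1)"
    by (simp add: \<phi>_eq_iff qmul_closed)
  then show False
    using Qmult_rotation_commutes_y_dvd u_preimage_not_involution s by blast
qed

lemma a_not_cong_minus_one:
  assumes "n \<ge> 4"
  shows "\<not> [a = -1] (mod m)"
proof
  assume "[a = -1] (mod m)"
  then have ux: "u \<star> x \<star> u = x" by (simp add: u_inverts_x_iff)
  obtain s where s: "0 \<le> s" "s < 2*K" "\<phi> (s, 0) = u"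
    by (rule u_preimage_rotation)
  obtain h where h: "h \<in> carrier (Qgrp K)" "\<phi> h = x"
    using \<phi>_preimage generators_in_carrier(2) .
  have s_in: "(s, 0) \<in> carrier (Qgrp K)"
    using s by (simp add: carrier_Qgrp)
  have "\<phi> ((s, 0) \<cdot> h \<cdot> (s, 0)) = \<phi> h"
    using ux s h by (simp add: \<phi>_mult qmul_closed s_in)
  then have h_inverted: "(s, 0) \<cdot> h \<cdot> (s, 0) = h"
    by (simp add: \<phi>_eq_iff qmul_closed h(1))
  from h(1) show False
  proof (cases rule: Qgrp_elem_cases)
    case (rotation i)
    then show False
      using Qmult_rotation_inverts_rotation_dvd h_inverted u_preimage_not_involution s by blast
  next
    case (reflection i)
    then have "\<phi> (h \<cdot> h \<cdot> h \<cdot> h \<cdot> h) = \<phi> h"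
      using Qmult_reflection_pow5 K_pos by simp
    then have "x \<star> x \<star> x \<star> x \<star> x = x"
      using h by (simp add: \<phi>_mult qmul_closed)
    with x_pow5_ne[OF assms] show False by contradiction
  qed
qed

lemma action_cases:
  "(n = 3 \<and> (([a = 1] (mod m) \<and> [b = -1] (mod m)) \<or>
              ([a = -1] (mod m) \<and> [b = 1] (mod m)) \<or>
              ([a = -1] (mod m) \<and> [b = -1] (mod m)))) \<or>
   (n \<ge> 4 \<and> [a = 1] (mod m) \<and> [b = -1] (mod m))"
  using a_cong_plus_minus_one b_cong_plus_minus_one action_nontrivial a_not_cong_minus_one
    n_ge_3 by (cases "n = 3") auto

end

lemma SDgrp_iso_of_action_cases:
  assumes "(n = 3 \<and> (([a = 1] (mod m) \<and> [b = -1] (mod m)) \<or>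
                     ([a = -1] (mod m) \<and> [b = 1] (mod m)) \<or>
                     ([a = -1] (mod m) \<and> [b = -1] (mod m)))) \<or>
           (n \<ge> 4 \<and> [a = 1] (mod m) \<and> [b = -1] (mod m))"
  shows "SDgrp m n 1 (-1) \<cong> SDgrp m n a b"
  using assms
proof (elim disjE conjE)
  assume "n = 3" "[a = -1] (mod m)" "[b = 1] (mod m)"
  then show ?thesis using SDgrp_Q8_iso_minus_one_one SDgrp_cong by metis
next
  assume "n = 3" "[a = -1] (mod m)" "[b = -1] (mod m)"
  then show ?thesis using SDgrp_Q8_iso_minus_one_minus_one SDgrp_cong by metis
qed (simp_all add: SDgrp_cong[of a 1 m b "-1"])

theorem lemma1p8:
  fixes n :: nat and m a b :: int
  assumes "n \<ge> 3" and "m \<ge> 1" and "odd m"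
    and "[a ^ 2 = 1] (mod m)" and "[b ^ 2 = 1] (mod m)"
  shows "Qgrp (2 ^ (n - 2) * m) \<cong> SDgrp m n a b \<longleftrightarrow>
    ((n = 3 \<and> (([a = 1] (mod m) \<and> [b = -1] (mod m)) \<or>
               ([a = -1] (mod m) \<and> [b = 1] (mod m)) \<or>
               ([a = -1] (mod m) \<and> [b = -1] (mod m)))) \<or>
     (n \<ge> 4 \<and> [a = 1] (mod m) \<and> [b = -1] (mod m)))"
  (is "?iso \<longleftrightarrow> ?actions")
proof
  assume ?iso
  show ?actions
  proof (cases "m = 1")
    case True
    with assms(1) show ?thesis by (cases "n = 3") (auto simp: cong_def)
  next
    case False
    from \<open>?iso\<close> obtain \<phi> where "\<phi> \<in> iso (Qgrp (2 ^ (n - 2) * m)) (SDgrp m n a b)"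
      by (auto simp: is_iso_def)
    with assms(1-3) False interpret Qgrp_SDgrp_iso n m a b \<phi>
      by unfold_locales auto
    show ?thesis by (rule action_cases)
  qed
next
  assume ?actions
  have "Qgrp (2 ^ (n - 2) * m) \<cong> SDgrp m n 1 (-1)"
    using assms(2,3) by (intro Qgrp_iso_SDgrp_standard) auto
  also have "\<dots> \<cong> SDgrp m n a b"
    using \<open>?actions\<close> by (rule SDgrp_iso_of_action_cases)
  finally show ?iso .
qed

end
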